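(* Let $p(m,n)$, for integers $m,n\ge 0$ with $m+n>0$, be the unique function satisfying the recurrence $$p(m,n)=\frac{n}{m+n}\,p(m-1,n)+\frac{m}{m+n}\,p(m,n-1)\qquad (m>0,\ n>0)$$ with boundary conditions $p(m,0)=0$ for $m>0$ and $p(0,n)=1$ for $n>0$. Then for all integers $m\ge 0$, $n\ge 0$ with $m+n>0$, $$p(m,n)=\sum_{j=0}^{n}\frac{(-1)^j}{j!}\,\frac{(n-j)^{m+n}}{(m+n-j)!}.$$
   Context: "War of ruins": two armies A and B start with $m$ and $n$ soldiers. At each discrete step, while both are positive, with probability $m/(m+n)$ army B loses one soldier ($(m,n)\to(m,n-1)$) and with probability $n/(m+n)$ army A loses one soldier ($(m,n)\to(m-1,n)$). $p(m,n)$ is the probability that army A is reduced to $0$ soldiers before army B is; it is characterized by the recurrence and boundary conditions stated in the claim. *)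

theory Defs
  imports "HOL-Analysis.Analysis"
begin

end

theory Submission
  imports Defs
begin

text \<open>
  Write \<open>N = m + n\<close>. The closed form satisfies the boundary conditions because
  \<open>n! \<cdot> p(0,n)\<close> is the \<open>n\<close>-th forward difference of \<open>x\<^sup>n\<close>, which is \<open>n!\<close>. For the
  recurrence, the \<open>j = 0\<close> terms of \<open>p(m,n)\<close> and \<open>p(m-1,n)\<close> differ by the factor \<open>n/N\<close>, and
  every other term of \<open>p(m,n)\<close> splits, by a partial fraction decomposition, into the
  corresponding terms of \<open>p(m-1,n)\<close> and \<open>p(m,n-1)\<close>.
\<close>

definition fwd_diff_power :: "nat \<Rightarrow> nat \<Rightarrow> real \<Rightarrow> real" where
  "fwd_diff_power n k a = (\<Sum>j\<le>n. (-1) ^ j * real (n choose j) * (a + real (n - j)) ^ k)"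

lemma fwd_diff_power_Suc:
  "fwd_diff_power (Suc n) (Suc k) a = a * fwd_diff_power (Suc n) k a + real (Suc n) * fwd_diff_power n k (a + 1)"
proof -
  have "fwd_diff_power (Suc n) (Suc k) a =
      (\<Sum>j\<le>Suc n. (-1) ^ j * real (Suc n choose j) * (a + real (Suc n - j)) ^ k * a)
      + (\<Sum>j\<le>Suc n. (-1) ^ j * (real (Suc n - j) * real (Suc n choose j)) * (a + real (Suc n - j)) ^ k)"
    unfolding fwd_diff_power_def by (simp add: sum.distrib[symmetric] algebra_simps)
  also have "(\<Sum>j\<le>Suc n. (-1) ^ j * real (Suc n choose j) * (a + real (Suc n - j)) ^ k * a)
      = a * fwd_diff_power (Suc n) k a"
    unfolding fwd_diff_power_def by (simp add: sum_distrib_left algebra_simps)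
  also have "(\<Sum>j\<le>Suc n. (-1) ^ j * (real (Suc n - j) * real (Suc n choose j)) * (a + real (Suc n - j)) ^ k)
      = (\<Sum>j\<le>Suc n. (-1) ^ j * (real (Suc n) * real (n choose j)) * (a + real (Suc n - j)) ^ k)"
  proof -
    have "real (Suc n - j) * real (Suc n choose j) = real (Suc n) * real (n choose j)" for j
      using binomial_absorb_comp[of "Suc n" j] by (metis diff_Suc_1 of_nat_mult)
    then show ?thesis by (simp only:)
  qed
  also have "\<dots> = (\<Sum>j\<le>n. (-1) ^ j * (real (Suc n) * real (n choose j)) * (a + real (Suc n - j)) ^ k)"
    by simp
  also have "\<dots> = real (Suc n) * fwd_diff_power n k (a + 1)"
    unfolding fwd_diff_power_def sum_distrib_left
    by (rule sum.cong) (simp_all add: Suc_diff_le algebra_simps)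
  finally show ?thesis .
qed

lemma fwd_diff_power_less: "k < n \<Longrightarrow> fwd_diff_power n k a = 0"
proof (induction k arbitrary: n a)
  case 0
  then show ?case
    using choose_alternating_sum[of n, where 'a = real] by (simp add: fwd_diff_power_def)
next
  case (Suc k)
  then obtain n' where "n = Suc n'" "k < n'"
    by (cases n) simp_all
  with Suc show ?case
    by (simp add: fwd_diff_power_Suc)
qed

lemma fwd_diff_power_same: "fwd_diff_power n n a = fact n"
proof (induction n arbitrary: a)
  case 0
  then show ?case by (simp add: fwd_diff_power_def)
next
  case (Suc n)
  then show ?case by (simp add: fwd_diff_power_Suc fwd_diff_power_less)
qed

definition ruin_term :: "nat \<Rightarrow> nat \<Rightarrow> nat \<Rightarrow> real" where
  "ruin_term m n j = (-1) ^ j / fact j * (real (n - j) ^ (m + n) / fact (m + n - j))"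

lemma partial_fractions:
  fixes a b e :: real
  assumes "a > 0" "b > 0"
  shows "e / (a * b) = (a + e) / ((a + b) * a) - (b - e) / ((a + b) * b)"
proof -
  have "a + b \<noteq> 0" "a \<noteq> 0" "b \<noteq> 0" using assms by simp_all
  then show ?thesis by (simp add: divide_simps del: distrib_left_numeral) (simp add: algebra_simps)
qed

lemma ruin_term_Suc_0:
  "ruin_term (Suc m) n 0 = real n / real (Suc m + n) * ruin_term m n 0"
  by (simp add: ruin_term_def del: of_nat_Suc)

lemma ruin_term_Suc_rec:
  assumes "i \<le> n"
  shows "ruin_term (Suc m) (Suc n) (Suc i) =
    real (Suc n) / real (Suc m + Suc n) * ruin_term m (Suc n) (Suc i)
    + real (Suc m) / real (Suc m + Suc n) * ruin_term (Suc m) n i"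
proof -
  obtain e where n: "n = i + e" using assms le_Suc_ex by blast
  define a where "a = real i + 1"
  define b where "b = real m + real e + 1"
  define K where "K = (-1) ^ i * real e ^ (m + i + e + 1) / (fact i * fact (m + e))"
  have a_b: "a > 0" "b > 0" "real (Suc m + Suc n) = a + b" "real (Suc n) = a + real e" "real (Suc m) = b - real e"
    by (simp_all add: a_def b_def n)
  have fact_a: "fact (Suc i) = a * fact i" and fact_b: "fact (Suc (e + m)) = b * fact (e + m)"
    by (simp_all add: a_def b_def algebra_simps)
  have "ruin_term (Suc m) (Suc n) (Suc i) = - K * (real e / (a * b))"
    unfolding ruin_term_def n K_def by (simp add: fact_a fact_b Suc_diff_le add_ac mult_ac del: fact_Suc)
  moreover have "ruin_term m (Suc n) (Suc i) = - K / a"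
    unfolding ruin_term_def n K_def by (simp add: fact_a Suc_diff_le add_ac mult_ac del: fact_Suc)
  moreover have "ruin_term (Suc m) n i = K / b"
    unfolding ruin_term_def n K_def by (simp add: fact_b add_ac mult_ac del: fact_Suc)
  ultimately show ?thesis
    unfolding a_b(3-5) partial_fractions[OF a_b(1,2)] by (simp add: field_simps)
qed

definition ruin_closed_form :: "nat \<Rightarrow> nat \<Rightarrow> real" where
  "ruin_closed_form m n = (\<Sum>j = 0..n. ruin_term m n j)"

lemma ruin_closed_form_0_left: "ruin_closed_form 0 n = 1"
proof -
  have "ruin_closed_form 0 n = fwd_diff_power n n 0 / fact n"
    unfolding ruin_closed_form_def ruin_term_def fwd_diff_power_def atLeast0AtMost sum_divide_distrib
    by (rule sum.cong) (simp_all add: binomial_fact field_simps)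
  then show ?thesis by (simp add: fwd_diff_power_same)
qed

lemma ruin_closed_form_0_right: "m > 0 \<Longrightarrow> ruin_closed_form m 0 = 0"
  by (simp add: ruin_closed_form_def ruin_term_def)

lemma ruin_closed_form_Suc_Suc:
  "ruin_closed_form (Suc m) (Suc n) =
    real (Suc n) / real (Suc m + Suc n) * ruin_closed_form m (Suc n)
    + real (Suc m) / real (Suc m + Suc n) * ruin_closed_form (Suc m) n"
  unfolding ruin_closed_form_def sum.atLeast0_atMost_Suc_shift
  by (simp add: ruin_term_Suc_0 ruin_term_Suc_rec sum.distrib sum_distrib_left distrib_left)

definition ruin_recurrence :: "(nat \<Rightarrow> nat \<Rightarrow> real) \<Rightarrow> bool" where
  "ruin_recurrence p \<longleftrightarrow>
    (\<forall>m n. m > 0 \<longrightarrow> n > 0 \<longrightarrow>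
       p m n = real n / real (m + n) * p (m - 1) n + real m / real (m + n) * p m (n - 1))
    \<and> (\<forall>m > 0. p m 0 = 0) \<and> (\<forall>n > 0. p 0 n = 1)"

lemma ruin_recurrence_closed_form: "ruin_recurrence ruin_closed_form"
  unfolding ruin_recurrence_def
proof (intro conjI allI impI)
  fix m n :: nat
  assume "m > 0" "n > 0"
  then obtain m' n' where "m = Suc m'" "n = Suc n'"
    using gr0_conv_Suc by blast
  then show "ruin_closed_form m n = real n / real (m + n) * ruin_closed_form (m - 1) n
      + real m / real (m + n) * ruin_closed_form m (n - 1)"
    using ruin_closed_form_Suc_Suc by simp
qed (simp_all add: ruin_closed_form_0_left ruin_closed_form_0_right)

lemma ruin_recurrence_Suc_Suc:
  assumes "ruin_recurrence p"
  shows "p (Suc m) (Suc n) =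
    real (Suc n) / real (Suc m + Suc n) * p m (Suc n) + real (Suc m) / real (Suc m + Suc n) * p (Suc m) n"
  using assms unfolding ruin_recurrence_def by (metis diff_Suc_1 zero_less_Suc)

lemma ruin_recurrence_unique:
  assumes p: "ruin_recurrence p" and q: "ruin_recurrence q" and "m + n > 0"
  shows "p m n = q m n"
  using assms(3)
proof (induction m arbitrary: n)
  case 0
  with p q show ?case by (simp add: ruin_recurrence_def)
next
  case (Suc m)
  note IH_m = Suc.IH
  show ?case
  proof (induction n)
    case 0
    with p q show ?case by (simp add: ruin_recurrence_def)
  next
    case (Suc n)
    then have "p (Suc m) n = q (Suc m) n" and "p m (Suc n) = q m (Suc n)"
      using IH_m by simp_all
    then show ?case
      by (simp only: ruin_recurrence_Suc_Suc[OF p] ruin_recurrence_Suc_Suc[OF q])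
  qed
qed

theorem proposition1:
  fixes p :: "nat \<Rightarrow> nat \<Rightarrow> real"
  assumes rec: "\<And>m n. m > 0 \<Longrightarrow> n > 0 \<Longrightarrow>
      p m n = real n / real (m + n) * p (m - 1) n + real m / real (m + n) * p m (n - 1)"
    and bound_B: "\<And>m. m > 0 \<Longrightarrow> p m 0 = 0"
    and bound_A: "\<And>n. n > 0 \<Longrightarrow> p 0 n = 1"
    and pos: "m + n > 0"
  shows "p m n = (\<Sum>j = 0..n. (-1) ^ j / fact j * (real (n - j) ^ (m + n) / fact (m + n - j)))"
proof -
  have "ruin_recurrence p"
    using rec bound_B bound_A by (simp add: ruin_recurrence_def)
  then have "p m n = ruin_closed_form m n"
    using ruin_recurrence_closed_form pos by (rule ruin_recurrence_unique)
  then show ?thesis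
    by (simp add: ruin_closed_form_def ruin_term_def)
qed

end
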